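(* Let $\mathcal W$ be a monotonic game on $[n]$ and $i\neq j$ players. Then the game $\hat{\mathcal W}$ obtained by imposing an asymmetric reciprocal strong YES-quarrel between $i$ and $j$ is quasi-monotonic (i.e. 1-monotonic).
   Context: Players are $[n]=\{1,\dots,n\}$. A binary voting game on $[n]$ is identified with its collection $\mathcal W\subseteq 2^{[n]}$ of winning sets ($S\in\mathcal W$ means the division in which exactly the members of $S$ vote YES has outcome YES). It is monotonic if $T\subseteq S$ and $T\in\mathcal W$ imply $S\in\mathcal W$. For an integer $k\ge0$, a game $\mathcal W$ is $k$-monotonic if for every $S\subseteq[n]$ with $S\notin\mathcal W$ and every proper subset $T\subsetneq S$ there exists $K$ with $|K|\le k$ such that $T\setminus K\notin\mathcal W$; quasi-monotonic means 1-monotonic. Asymmetric reciprocal strong YES-quarrel between $i$ and $j$: for every $S\subseteq[n]\setminus\{i,j\}$, $S\cup\{i,j\}\in\hat{\mathcal W}\iff S\in\mathcal W$; $S\cup\{i\}\in\hat{\mathcal W}\iff S\cup\{i\}\in\mathcal W$; $S\cup\{j\}\in\hat{\mathcal W}\iff S\cup\{j\}\in\mathcal W$; $S\in\hat{\mathcal W}\iff S\in\mathcal W$. *)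

theory Defs
  imports Main
begin

definition game :: "nat \<Rightarrow> nat set set \<Rightarrow> bool" where
  "game n W \<longleftrightarrow> W \<subseteq> Pow {1..n}"

definition monotonic :: "nat \<Rightarrow> nat set set \<Rightarrow> bool" where
  "monotonic n W \<longleftrightarrow>
     (\<forall>S T. S \<subseteq> {1..n} \<longrightarrow> T \<subseteq> S \<longrightarrow> T \<in> W \<longrightarrow> S \<in> W)"

definition k_monotonic :: "nat \<Rightarrow> nat \<Rightarrow> nat set set \<Rightarrow> bool" where
  "k_monotonic k n W \<longleftrightarrow>
     (\<forall>S T. S \<subseteq> {1..n} \<longrightarrow> S \<notin> W \<longrightarrow> T \<subset> S \<longrightarrow>
        (\<exists>K. finite K \<and> card K \<le> k \<and> T - K \<notin> W))"

definition quasi_monotonic :: "nat \<Rightarrow> nat set set \<Rightarrow> bool" where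
  "quasi_monotonic n W \<longleftrightarrow> k_monotonic 1 n W"

text \<open>The game obtained from W by imposing an asymmetric reciprocal strong
  YES-quarrel between i and j, as a set of coalitions of {1..n}:
  for S \<subseteq> [n]-{i,j}: S\<union>{i,j} wins iff S wins; every other coalition
  keeps its original outcome.\<close>

definition asym_recip_strong_yes_quarrel ::
  "nat \<Rightarrow> nat set set \<Rightarrow> nat \<Rightarrow> nat \<Rightarrow> nat set set" where
  "asym_recip_strong_yes_quarrel n W i j =
     {S. S \<subseteq> {1..n} \<and>
         (if i \<in> S \<and> j \<in> S then S - {i, j} \<in> W else S \<in> W)}"

end

theory Submission
  imports Defs
begin

text \<open>Membership of a coalition Y in the quarrel game is decided by its core: Y itself, or
  Y - {i, j} when Y contains both quarrelling players. Among coalitions that contain either both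
  or neither of i and j, the core is monotone under inclusion, so monotonicity of W passes
  losing coalitions downwards. A subcoalition T of a losing S that contains exactly one of i, j
  is brought into this class by removing that single player.\<close>

lemma mem_asym_recip_strong_yes_quarrel_iff:
  "Y \<in> asym_recip_strong_yes_quarrel n W i j \<longleftrightarrow>
     Y \<subseteq> {1..n} \<and> (if i \<in> Y \<and> j \<in> Y then Y - {i, j} \<in> W else Y \<in> W)"
  unfolding asym_recip_strong_yes_quarrel_def by simp

lemma monotonicD_losing:
  assumes "monotonic n W" "X \<subseteq> {1..n}" "Y \<subseteq> X" "X \<notin> W"
  shows "Y \<notin> W"
  using assms unfolding monotonic_def by blast

lemma asym_recip_strong_yes_quarrel_losing_subset:
  assumes mono: "monotonic n W"
    and X: "X \<subseteq> {1..n}" "X \<notin> asym_recip_strong_yes_quarrel n W i j"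
    and YX: "Y \<subseteq> X"
    and balanced: "i \<in> Y \<longleftrightarrow> j \<in> Y"
  shows "Y \<notin> asym_recip_strong_yes_quarrel n W i j"
proof -
  define core where "core Z = (if i \<in> Z \<and> j \<in> Z then Z - {i, j} else Z)" for Z :: "nat set"
  have "core X \<notin> W"
    using X by (auto simp: mem_asym_recip_strong_yes_quarrel_iff core_def split: if_splits)
  moreover have "core Y \<subseteq> core X"
    using YX balanced by (auto simp: core_def)
  moreover have "core X \<subseteq> {1..n}"
    using X by (auto simp: core_def)
  ultimately have "core Y \<notin> W"
    using monotonicD_losing[OF mono] by blast
  then show ?thesis
    by (auto simp: mem_asym_recip_strong_yes_quarrel_iff core_def split: if_splits)
qed

theorem theorem7:
  fixes n i j :: nat and W :: "nat set set"
  assumes "game n W"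
    and "monotonic n W"
    and "i \<in> {1..n}" and "j \<in> {1..n}" and "i \<noteq> j"
  shows "quasi_monotonic n (asym_recip_strong_yes_quarrel n W i j)"
  unfolding quasi_monotonic_def k_monotonic_def
proof (intro allI impI)
  fix S T
  assume S: "S \<subseteq> {1..n}" "S \<notin> asym_recip_strong_yes_quarrel n W i j" and "T \<subset> S"
  define K where "K = (if i \<in> T \<longleftrightarrow> j \<in> T then {} else T \<inter> {i, j})"
  have K_cases: "K = {} \<or> K = {i} \<or> K = {j}"
    unfolding K_def by auto
  have "T - K \<subseteq> S"
    using \<open>T \<subset> S\<close> by blast
  moreover have "i \<in> T - K \<longleftrightarrow> j \<in> T - K"
    unfolding K_def by auto
  ultimately have "T - K \<notin> asym_recip_strong_yes_quarrel n W i j"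
    using asym_recip_strong_yes_quarrel_losing_subset[OF assms(2) S] by blast
  moreover have "finite K" "card K \<le> 1"
    using K_cases by auto
  ultimately show "\<exists>K. finite K \<and> card K \<le> 1 \<and> T - K \<notin> asym_recip_strong_yes_quarrel n W i j"
    by blast
qed

end
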